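(* Fix $t\in\{1,\dots,M\}$ and let $z^*\in F(\mathcal{T}_t)$. Set $r_t=\min\{d_{sep}(z^*,C_t),\ d_{esc}(z^*,C_t)\}$. Then every $z\in B(z^*,r_t)$ satisfies $K_t(z)=K_t(z^* )$.
   Context: Fix reals $W,H>0$, integers $N\ge N_m\ge 2$, and widths $w_i>0$, heights $h_i>0$ for $1\le i\le N_m$. Points of $\mathbb{R}^{2N}$ are written $z=(x,y)$ with $x=(x_1,\dots,x_N)$, $y=(y_1,\dots,y_N)$. For $1\le i\le N_m$ let $B_i^x=\{z: 0\le x_i\le W-w_i\}$, $B_i^y=\{z: 0\le y_i\le H-h_i\}$; for $i\neq j$ let $B_{i,j}=B_i^x\cap B_i^y\cap B_j^x\cap B_j^y$, $O^x_{i,j}=\{z: x_i+w_i\le x_j\}$, $O^y_{i,j}=\{z: y_i+h_i\le y_j\}$. Define the closed convex sets $C_{i,j,\mathsf{L}}=O^x_{i,j}\cap B_{i,j}$, $C_{i,j,\mathsf{R}}=O^x_{j,i}\cap B_{i,j}$, $C_{i,j,\mathsf{B}}=O^y_{i,j}\cap B_{i,j}$, $C_{i,j,\mathsf{A}}=O^y_{j,i}\cap B_{i,j}$ (assumed nonempty) and $C_{i,j}=C_{i,j,\mathsf{L}}\cup C_{i,j,\mathsf{R}}\cup C_{i,j,\mathsf{B}}\cup C_{i,j,\mathsf{A}}$. Enumerate the pairs $1\le i<j\le N_m$ by $t=1,\dots,M$ and write $C_t=C_{i,j}$, $C_{t,k}=C_{i,j,k}$ for $k\in\{\mathsf{L},\mathsf{R},\mathsf{B},\mathsf{A}\}$.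 With $\|\cdot\|$ the Euclidean norm and $\mathrm{d}(z,C)=\inf_{c\in C}\|z-c\|$: $\mathcal{P}_t(z)=\{c\in C_t:\|z-c\|=\mathrm{d}(z,C_t)\}$ (set-valued metric projection), $P_{t,k}(z)$ is the unique nearest point of $C_{t,k}$ to $z$; for a fixed relaxation parameter $\lambda\in(0,2)$, $\mathcal{T}_t(z)=\{z+\lambda(p-z):p\in\mathcal{P}_t(z)\}$ and $F(\mathcal{T}_t)=\{z: z\in\mathcal{T}_t(z)\}$. Active indices: $K_t(z)=\{k\in\{\mathsf{L},\mathsf{R},\mathsf{B},\mathsf{A}\}: P_{t,k}(z)\in\mathcal{P}_t(z)\}$. Escaping distance: $d_{esc}(z^*,C_t)=\inf\{\|z-z^*\| : z\notin C_{t,k}\text{ for some }k\in K_t(z^* )\}$. Separating distance: $d_{sep}(z^*,C_t)=\min\{\mathrm{d}(z^*,C_{t,k}) : k\notin K_t(z^* )\}$. $B(z,r)=\{z':\|z'-z\|<r\}$ is the open ball (empty if $r=0$). *)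

theory Defs
  imports "HOL-Analysis.Analysis" "HOL-Library.Extended_Real"
begin

text \<open>Points of R^{2N} are pairs z = (x, y) of vectors x, y :: real^'n, where the finite
  coordinate type 'n has CARD('n) = N elements.  The product norm is the Euclidean norm
  on R^{2N}.  Boxes are indexed by a subset I of 'n (of size N_m); 'n is linearly
  ordered so that pairs i < j make sense.\<close>

type_synonym 'n point = "(real^'n) \<times> (real^'n)"

datatype label = L | R | Bel | Abv

definition Bx :: "real \<Rightarrow> ('n::finite \<Rightarrow> real) \<Rightarrow> 'n \<Rightarrow> 'n point set" where
  "Bx W w i = {z. 0 \<le> fst z $ i \<and> fst z $ i \<le> W - w i}"

definition By :: "real \<Rightarrow> ('n::finite \<Rightarrow> real) \<Rightarrow> 'n \<Rightarrow> 'n point set" where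
  "By H h i = {z. 0 \<le> snd z $ i \<and> snd z $ i \<le> H - h i}"

definition Bij :: "real \<Rightarrow> real \<Rightarrow> ('n::finite \<Rightarrow> real) \<Rightarrow> ('n \<Rightarrow> real) \<Rightarrow> 'n \<Rightarrow> 'n \<Rightarrow> 'n point set" where
  "Bij W H w h i j = Bx W w i \<inter> By H h i \<inter> Bx W w j \<inter> By H h j"

definition Ox :: "('n::finite \<Rightarrow> real) \<Rightarrow> 'n \<Rightarrow> 'n \<Rightarrow> 'n point set" where
  "Ox w i j = {z. fst z $ i + w i \<le> fst z $ j}"

definition Oy :: "('n::finite \<Rightarrow> real) \<Rightarrow> 'n \<Rightarrow> 'n \<Rightarrow> 'n point set" where
  "Oy h i j = {z. snd z $ i + h i \<le> snd z $ j}"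

definition Ck :: "real \<Rightarrow> real \<Rightarrow> ('n::finite \<Rightarrow> real) \<Rightarrow> ('n \<Rightarrow> real) \<Rightarrow> 'n \<Rightarrow> 'n \<Rightarrow> label \<Rightarrow> 'n point set" where
  "Ck W H w h i j k = (case k of
      L \<Rightarrow> Ox w i j \<inter> Bij W H w h i j
    | R \<Rightarrow> Ox w j i \<inter> Bij W H w h i j
    | Bel \<Rightarrow> Oy h i j \<inter> Bij W H w h i j
    | Abv \<Rightarrow> Oy h j i \<inter> Bij W H w h i j)"

definition Cu :: "real \<Rightarrow> real \<Rightarrow> ('n::finite \<Rightarrow> real) \<Rightarrow> ('n \<Rightarrow> real) \<Rightarrow> 'n \<Rightarrow> 'n \<Rightarrow> 'n point set" where
  "Cu W H w h i j = (\<Union>k. Ck W H w h i j k)"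

definition proj_set :: "'a::metric_space set \<Rightarrow> 'a \<Rightarrow> 'a set" where
  "proj_set C z = {c \<in> C. dist z c = infdist z C}"

definition relax_op :: "real \<Rightarrow> 'a::real_normed_vector set \<Rightarrow> 'a \<Rightarrow> 'a set" where
  "relax_op lam C z = {z + lam *\<^sub>R (p - z) | p. p \<in> proj_set C z}"

definition fixpts :: "('a \<Rightarrow> 'a set) \<Rightarrow> 'a set" where
  "fixpts T = {z. z \<in> T z}"

text \<open>Active indices K_t(z); P_{t,k}(z) is the (unique) nearest point closest_point.\<close>
definition active :: "real \<Rightarrow> real \<Rightarrow> ('n::finite \<Rightarrow> real) \<Rightarrow> ('n \<Rightarrow> real) \<Rightarrow> 'n \<Rightarrow> 'n \<Rightarrow> 'n point \<Rightarrow> label set" where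
  "active W H w h i j z =
     {k. closest_point (Ck W H w h i j k) z \<in> proj_set (Cu W H w h i j) z}"

definition d_esc :: "real \<Rightarrow> real \<Rightarrow> ('n::finite \<Rightarrow> real) \<Rightarrow> ('n \<Rightarrow> real) \<Rightarrow> 'n \<Rightarrow> 'n \<Rightarrow> 'n point \<Rightarrow> real" where
  "d_esc W H w h i j zs =
     Inf {norm (z - zs) | z. \<exists>k \<in> active W H w h i j zs. z \<notin> Ck W H w h i j k}"

text \<open>Separating distance (a minimum over a finite set of labels; the minimum over the
  empty set is taken to be +\<infinity>, hence the value is in ereal).\<close>
definition d_sep :: "real \<Rightarrow> real \<Rightarrow> ('n::finite \<Rightarrow> real) \<Rightarrow> ('n \<Rightarrow> real) \<Rightarrow> 'n \<Rightarrow> 'n \<Rightarrow> 'n point \<Rightarrow> ereal" where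
  "d_sep W H w h i j zs =
     (INF k \<in> - active W H w h i j zs. ereal (infdist zs (Ck W H w h i j k)))"

definition open_ball_er :: "'a::metric_space \<Rightarrow> ereal \<Rightarrow> 'a set" where
  "open_ball_er c r = {z. ereal (dist z c) < r}"

end

theory Submission
  imports Defs
begin

text \<open>A fixed point of the relaxed projection with \<open>lam \<noteq> 0\<close> lies in \<open>C\<^sub>t\<close>, and at a point of
  \<open>C\<^sub>t\<close> a (closed, nonempty) piece is active exactly when it contains the point. Within
  \<open>d\<^sub>e\<^sub>s\<^sub>c\<close> of \<open>z\<^sup>*\<close> a point stays in every piece active at \<open>z\<^sup>*\<close>, hence in \<open>C\<^sub>t\<close>; within \<open>d\<^sub>s\<^sub>e\<^sub>p\<close> it
  lies in no other piece.\<close>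

lemma closed_Bx: "closed (Bx W w i)"
  unfolding Bx_def by (intro closed_Collect_conj closed_Collect_le continuous_intros)

lemma closed_By: "closed (By H h i)"
  unfolding By_def by (intro closed_Collect_conj closed_Collect_le continuous_intros)

lemma closed_Ox: "closed (Ox w i j)"
  unfolding Ox_def by (intro closed_Collect_le continuous_intros)

lemma closed_Oy: "closed (Oy h i j)"
  unfolding Oy_def by (intro closed_Collect_le continuous_intros)

lemma closed_Ck: "closed (Ck W H w h i j k)"
  by (cases k) (simp_all add: Ck_def Bij_def closed_Int closed_Bx closed_By closed_Ox closed_Oy)

lemma proj_set_of_mem: "z \<in> C \<Longrightarrow> proj_set C z = {z}"
  unfolding proj_set_def by (auto simp: infdist_zero)

lemma fixpts_relax_op_subset:
  assumes "lam \<noteq> 0"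
  shows "fixpts (relax_op lam C) \<subseteq> C"
proof
  fix z assume "z \<in> fixpts (relax_op lam C)"
  then obtain p where p: "p \<in> proj_set C z" "z = z + lam *\<^sub>R (p - z)"
    unfolding fixpts_def relax_op_def by auto
  from p(2) assms have "p = z" by simp
  with p(1) show "z \<in> C" unfolding proj_set_def by simp
qed

lemma closest_point_mem_proj_set_Union_iff:
  fixes A :: "'i \<Rightarrow> 'a::euclidean_space set"
  assumes "closed (A k)" "A k \<noteq> {}" "z \<in> (\<Union>k. A k)"
  shows "closest_point (A k) z \<in> proj_set (\<Union>k. A k) z \<longleftrightarrow> z \<in> A k"
proof -
  have "closest_point (A k) z \<in> proj_set (\<Union>k. A k) z \<longleftrightarrow> closest_point (A k) z = z"
    using proj_set_of_mem[OF assms(3)] by simp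
  also have "\<dots> \<longleftrightarrow> z \<in> A k"
    by (metis closest_point_self closest_point_in_set assms(1,2))
  finally show ?thesis .
qed

lemma active_iff_mem_Ck:
  assumes "z \<in> Cu W H w h i j" "Ck W H w h i j k \<noteq> {}"
  shows "k \<in> active W H w h i j z \<longleftrightarrow> z \<in> Ck W H w h i j k"
  using closest_point_mem_proj_set_Union_iff[of "Ck W H w h i j" k z, OF closed_Ck assms(2)] assms(1)
  unfolding active_def Cu_def by simp

lemma mem_Ck_if_dist_less_d_esc:
  assumes "dist z zs < d_esc W H w h i j zs" "k \<in> active W H w h i j zs"
  shows "z \<in> Ck W H w h i j k"
proof (rule ccontr)
  assume "z \<notin> Ck W H w h i j k"
  with assms(2) have "norm (z - zs) \<in>
      {norm (z' - zs) | z'. \<exists>k \<in> active W H w h i j zs. z' \<notin> Ck W H w h i j k}"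
    by blast
  then have "d_esc W H w h i j zs \<le> norm (z - zs)"
    unfolding d_esc_def by (intro cInf_lower) (auto intro: bdd_belowI[of _ 0])
  with assms(1) show False by (simp add: dist_norm)
qed

lemma not_mem_Ck_if_dist_less_d_sep:
  assumes "ereal (dist z zs) < d_sep W H w h i j zs" "k \<notin> active W H w h i j zs"
  shows "z \<notin> Ck W H w h i j k"
proof
  assume "z \<in> Ck W H w h i j k"
  then have "infdist zs (Ck W H w h i j k) \<le> dist z zs"
    by (metis infdist_le dist_commute)
  moreover have "d_sep W H w h i j zs \<le> ereal (infdist zs (Ck W H w h i j k))"
    unfolding d_sep_def using assms(2) by (intro INF_lower) simp
  ultimately show False
    using assms(1) by (meson ereal_less_eq(3) leD order_trans)
qed

theorem mainTheorem2:
  fixes W H lam :: real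
    and I :: "'n::{finite,linorder} set"
    and w h :: "'n \<Rightarrow> real"
    and i j :: 'n
    and zs :: "'n point"
  assumes W: "W > 0" and H: "H > 0"
    and I2: "card I \<ge> 2"
    and wpos: "\<forall>k\<in>I. w k > 0" and hpos: "\<forall>k\<in>I. h k > 0"
    and nonempty: "\<forall>a\<in>I. \<forall>b\<in>I. a \<noteq> b \<longrightarrow> (\<forall>k. Ck W H w h a b k \<noteq> {})"
    and lam: "0 < lam" "lam < 2"
    and ij: "i \<in> I" "j \<in> I" "i < j"
    and fixed: "zs \<in> fixpts (relax_op lam (Cu W H w h i j))"
  shows "\<forall>z \<in> open_ball_er zs (min (d_sep W H w h i j zs) (ereal (d_esc W H w h i j zs))).
           active W H w h i j z = active W H w h i j zs"
proof
  fix z assume "z \<in> open_ball_er zs (min (d_sep W H w h i j zs) (ereal (d_esc W H w h i j zs)))"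
  then have esc: "dist z zs < d_esc W H w h i j zs"
    and sep: "ereal (dist z zs) < d_sep W H w h i j zs"
    unfolding open_ball_er_def by auto
  have ne: "Ck W H w h i j k \<noteq> {}" for k using nonempty ij by auto
  have zs_in: "zs \<in> Cu W H w h i j"
    using fixpts_relax_op_subset[of lam] lam(1) fixed by auto
  then obtain k0 where "zs \<in> Ck W H w h i j k0"
    unfolding Cu_def by blast
  then have "k0 \<in> active W H w h i j zs"
    using active_iff_mem_Ck[OF zs_in ne] by simp
  then have z_in: "z \<in> Cu W H w h i j"
    using mem_Ck_if_dist_less_d_esc[OF esc] unfolding Cu_def by blast
  show "active W H w h i j z = active W H w h i j zs"
    using active_iff_mem_Ck[OF z_in ne] mem_Ck_if_dist_less_d_esc[OF esc]
      not_mem_Ck_if_dist_less_d_sep[OF sep] by auto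
qed

end
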